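(* Let $G$ be a finite undirected graph, let $\tau\ge 1$ and $k$ be integers, and let $G'$ be the $(k,\tau)$-truss of $G$. Then for every connected component $G''$ of $G'$, the diameter satisfies $\omega(G'')\le \frac{2\tau(|V(G'')|-1)}{k}$.
   Context: Graphs are finite, simple, undirected and unweighted. A path may repeat vertices; its length is its number of edges. The diameter $\omega(H)$ of a connected graph $H$ is the maximum, over pairs of vertices, of the length of a shortest path between them in $H$. For vertices $v,u$ of a graph $H$, $u$ is $\tau$-hop reachable from $v$ in $H$ if $H$ contains a path between $u$ and $v$ of length at most $\tau$. $N_\tau(v,H)$ is the set of vertices $u\neq v$ that are $\tau$-hop reachable from $v$ in $H$. For an edge $e=(u,v)$ of $H$, $\Delta_\tau(e,H)=N_\tau(u,H)\cap N_\tau(v,H)$ and $\mathrm{sup}_\tau(e,H)=|\Delta_\tau(e,H)|$. The $(k,\tau)$-truss of $G$ is the maximal subgraph $G'$ of $G$ such that $\mathrm{sup}_\tau(e,G')\ge k-2$ for every edge $e\in E(G')$ (supports computed inside $G'$) and no more edges of $G$ can be added while keeping this property; a subgraph is determined by its edge set, its vertex set being the set of endpoints of its edges. *)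

theory Defs
  imports Complex_Main
begin

text \<open>A finite simple undirected graph is represented by its edge set: a finite set of
  2-element vertex sets. A subgraph is determined by its edge set; its vertices are the
  endpoints of its edges.\<close>

type_synonym 'a graph = "'a set set"

definition simple_graph :: "'a graph \<Rightarrow> bool" where
  "simple_graph G \<longleftrightarrow> finite G \<and> (\<forall>e\<in>G. card e = 2)"

definition verts :: "'a graph \<Rightarrow> 'a set" where
  "verts H = \<Union>H"

definition walk :: "'a graph \<Rightarrow> 'a list \<Rightarrow> bool" where
  "walk H xs \<longleftrightarrow> xs \<noteq> [] \<and> (\<forall>i. Suc i < length xs \<longrightarrow> {xs ! i, xs ! Suc i} \<in> H)"

definition walk_len :: "'a list \<Rightarrow> nat" where
  "walk_len xs = length xs - 1"

definition hop_reachable :: "'a graph \<Rightarrow> nat \<Rightarrow> 'a \<Rightarrow> 'a \<Rightarrow> bool" where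
  "hop_reachable H \<tau> v u \<longleftrightarrow>
     (\<exists>xs. walk H xs \<and> hd xs = v \<and> last xs = u \<and> walk_len xs \<le> \<tau>)"

definition nbhd :: "'a graph \<Rightarrow> nat \<Rightarrow> 'a \<Rightarrow> 'a set" where
  "nbhd H \<tau> v = {u. u \<noteq> v \<and> hop_reachable H \<tau> v u}"

definition support :: "'a graph \<Rightarrow> nat \<Rightarrow> 'a \<Rightarrow> 'a \<Rightarrow> nat" where
  "support H \<tau> u v = card (nbhd H \<tau> u \<inter> nbhd H \<tau> v)"

definition truss_property :: "'a graph \<Rightarrow> int \<Rightarrow> nat \<Rightarrow> bool" where
  "truss_property H k \<tau> \<longleftrightarrow> (\<forall>u v. {u, v} \<in> H \<longrightarrow> int (support H \<tau> u v) \<ge> k - 2)"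

definition is_truss :: "'a graph \<Rightarrow> int \<Rightarrow> nat \<Rightarrow> 'a graph \<Rightarrow> bool" where
  "is_truss G k \<tau> T \<longleftrightarrow> T \<subseteq> G \<and> truss_property T k \<tau> \<and>
     (\<forall>T'. T \<subseteq> T' \<and> T' \<subseteq> G \<and> truss_property T' k \<tau> \<longrightarrow> T' = T)"

definition connected_in :: "'a graph \<Rightarrow> 'a \<Rightarrow> 'a \<Rightarrow> bool" where
  "connected_in H u v \<longleftrightarrow> (\<exists>xs. walk H xs \<and> hd xs = u \<and> last xs = v)"

definition is_component :: "'a graph \<Rightarrow> 'a graph \<Rightarrow> bool" where
  "is_component H C \<longleftrightarrow> (\<exists>v\<in>verts H.
     C = {e\<in>H. e \<subseteq> {u\<in>verts H. connected_in H v u}})"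

definition dist :: "'a graph \<Rightarrow> 'a \<Rightarrow> 'a \<Rightarrow> nat" where
  "dist H u v = (LEAST n. \<exists>xs. walk H xs \<and> hd xs = u \<and> last xs = v \<and> walk_len xs = n)"

definition diameter :: "'a graph \<Rightarrow> nat" where
  "diameter H = Max {dist H u v | u v. u \<in> verts H \<and> v \<in> verts H}"

end

theory Submission
  imports Defs
begin

(* Let P_0, ..., P_D be a shortest walk realising the diameter of the component. For each
   edge P_i P_(i+1), the vertices tau-hop reachable from both of its ends (the two ends
   included) number at least k, by the truss property. A vertex in the sets of two edges
   i <= j is tau-hop reachable from P_i and from P_(j+1), so j + 1 - i <= 2 tau because the
   walk is shortest; hence every vertex lies in at most 2 tau of these sets, and the ends
   P_0 and P_D in at most tau. Double counting gives D k <= 2 tau (|V| - 1). The truss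
   property passes to components since tau-hop walks never leave a component. *)

lemma walk_Nil [simp]: "\<not> walk H []"
  by (simp add: walk_def)

lemma walk_singleton [simp]: "walk H [x]"
  by (simp add: walk_def)

lemma walk_Cons_Cons [simp]: "walk H (x # y # xs) \<longleftrightarrow> {x, y} \<in> H \<and> walk H (y # xs)"
  by (auto simp: walk_def less_Suc_eq_0_disj)

lemma walk_mono: "walk H xs \<Longrightarrow> H \<subseteq> H' \<Longrightarrow> walk H' xs"
  by (auto simp: walk_def)

lemma walk_append: "walk H xs \<Longrightarrow> walk H ys \<Longrightarrow> last xs = hd ys \<Longrightarrow> walk H (xs @ tl ys)"
proof (induction xs rule: induct_list012)
  case (2 x)
  then show ?case by (cases ys) auto
qed auto

lemma walk_rev: "walk H xs \<Longrightarrow> walk H (rev xs)"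
proof (induction xs rule: induct_list012)
  case (3 x y zs)
  then have "walk H (rev (y # zs) @ tl [y, x])"
    by (intro walk_append) (auto simp: insert_commute)
  then show ?case by simp
qed auto

lemma walk_take: "walk H xs \<Longrightarrow> 0 < n \<Longrightarrow> walk H (take n xs)"
  by (auto simp: walk_def)

lemma walk_drop: "walk H xs \<Longrightarrow> n < length xs \<Longrightarrow> walk H (drop n xs)"
  by (auto simp: walk_def)

lemma walk_len_append: "xs \<noteq> [] \<Longrightarrow> ys \<noteq> [] \<Longrightarrow> walk_len (xs @ tl ys) = walk_len xs + walk_len ys"
  by (cases xs; cases ys) (auto simp: walk_len_def)

definition walk_betw :: "'a graph \<Rightarrow> 'a \<Rightarrow> 'a list \<Rightarrow> 'a \<Rightarrow> bool" where
  "walk_betw H u xs v \<longleftrightarrow> walk H xs \<and> hd xs = u \<and> last xs = v"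

lemma walk_betw_singleton: "walk_betw H u [u] u"
  by (simp add: walk_betw_def)

lemma walk_betw_edge: "{u, v} \<in> H \<Longrightarrow> walk_betw H u [u, v] v"
  by (simp add: walk_betw_def)

lemma walk_betw_rev: "walk_betw H u xs v \<Longrightarrow> walk_betw H v (rev xs) u"
  by (auto simp: walk_betw_def walk_rev hd_rev last_rev)

lemma walk_betw_append:
  assumes "walk_betw H u xs v" "walk_betw H v ys w"
  shows "walk_betw H u (xs @ tl ys) w"
proof -
  have "xs \<noteq> []" "ys \<noteq> []" using assms by (auto simp: walk_betw_def)
  then show ?thesis
    using assms walk_append[of H xs ys] by (cases ys) (auto simp: walk_betw_def)
qed

lemma walk_betw_take:
  assumes "walk H xs" "i < length xs"
  shows "walk_betw H (hd xs) (take (Suc i) xs) (xs ! i)"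
proof -
  have "last (take (Suc i) xs) = xs ! i"
    using assms(2) by (simp add: take_Suc_conv_app_nth)
  then show ?thesis
    using walk_take[OF assms(1)] by (simp add: walk_betw_def hd_take)
qed

lemma walk_betw_drop:
  "walk H xs \<Longrightarrow> i < length xs \<Longrightarrow> walk_betw H (xs ! i) (drop i xs) (last xs)"
  by (auto simp: walk_betw_def walk_drop hd_drop_conv_nth)

lemma walk_betw_last_in_verts:
  assumes "walk_betw H u xs v" "u \<noteq> v"
  shows "v \<in> verts H"
proof -
  have "walk H (rev xs)" "hd (rev xs) = v" "last (rev xs) = u"
    using walk_betw_rev[OF assms(1)] by (auto simp: walk_betw_def)
  then obtain y zs where "rev xs = v # y # zs"
    using assms(2) by (cases "rev xs" rule: remdups_adj.cases) simp_all
  with \<open>walk H (rev xs)\<close> have "{v, y} \<in> H" by simp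
  then show ?thesis by (auto simp: verts_def)
qed

lemma hop_reachable_iff: "hop_reachable H t u v \<longleftrightarrow> (\<exists>xs. walk_betw H u xs v \<and> walk_len xs \<le> t)"
  by (auto simp: hop_reachable_def walk_betw_def)

lemma hop_reachable_refl: "hop_reachable H t u u"
  using walk_betw_singleton by (fastforce simp: hop_reachable_iff walk_len_def)

lemma hop_reachable_edge: "{u, v} \<in> H \<Longrightarrow> 1 \<le> t \<Longrightarrow> hop_reachable H t u v"
  using walk_betw_edge by (fastforce simp: hop_reachable_iff walk_len_def)

lemma hop_reachable_sym: "hop_reachable H t u v \<Longrightarrow> hop_reachable H t v u"
  using walk_betw_rev by (fastforce simp: hop_reachable_iff walk_len_def)

lemma hop_reachable_trans:
  assumes "hop_reachable H s u v" "hop_reachable H t v w"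
  shows "hop_reachable H (s + t) u w"
proof -
  obtain xs ys where "walk_betw H u xs v" "walk_len xs \<le> s" "walk_betw H v ys w" "walk_len ys \<le> t"
    using assms by (auto simp: hop_reachable_iff)
  moreover have "xs \<noteq> []" "ys \<noteq> []"
    using calculation by (auto simp: walk_betw_def)
  ultimately show ?thesis
    unfolding hop_reachable_iff
    by (intro exI[of _ "xs @ tl ys"]) (simp add: walk_betw_append walk_len_append)
qed

lemma hop_reachable_in_verts: "hop_reachable H t u v \<Longrightarrow> u \<in> verts H \<Longrightarrow> v \<in> verts H"
  using walk_betw_last_in_verts by (fastforce simp: hop_reachable_iff)

lemma connected_in_iff: "connected_in H u v \<longleftrightarrow> (\<exists>xs. walk_betw H u xs v)"
  by (simp add: connected_in_def walk_betw_def)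

lemma connected_in_refl: "connected_in H u u"
  unfolding connected_in_iff by (rule exI[of _ "[u]"]) (rule walk_betw_singleton)

lemma connected_in_sym: "connected_in H u v \<Longrightarrow> connected_in H v u"
  using walk_betw_rev by (fastforce simp: connected_in_iff)

lemma connected_in_trans: "connected_in H u v \<Longrightarrow> connected_in H v w \<Longrightarrow> connected_in H u w"
  using walk_betw_append by (fastforce simp: connected_in_iff)

definition shortest_walk :: "'a graph \<Rightarrow> 'a list \<Rightarrow> bool" where
  "shortest_walk H xs \<longleftrightarrow> walk H xs \<and>
     (\<forall>ys. walk_betw H (hd xs) ys (last xs) \<longrightarrow> walk_len xs \<le> walk_len ys)"

lemma shortest_walk_exists:
  assumes "connected_in H u v"
  shows "\<exists>xs. walk_betw H u xs v \<and> shortest_walk H xs \<and> walk_len xs = dist H u v"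
proof -
  let ?P = "\<lambda>n. \<exists>xs. walk_betw H u xs v \<and> walk_len xs = n"
  have dist: "dist H u v = (LEAST n. ?P n)"
    by (simp add: dist_def walk_betw_def)
  have "?P (dist H u v)"
    unfolding dist by (rule LeastI_ex) (use assms in \<open>auto simp: connected_in_iff\<close>)
  then obtain xs where "walk_betw H u xs v" "walk_len xs = dist H u v"
    by blast
  moreover have "dist H u v \<le> walk_len ys" if "walk_betw H u ys v" for ys
    unfolding dist using that by (auto intro: Least_le)
  ultimately show ?thesis
    by (auto simp: shortest_walk_def walk_betw_def)
qed

lemma shortest_walk_segment_le:
  assumes "shortest_walk H xs" "i \<le> j" "j < length xs" "walk_betw H (xs ! i) ys (xs ! j)"
  shows "j - i \<le> walk_len ys"
proof -
  have xs: "walk H xs" using assms(1) by (simp add: shortest_walk_def)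
  have pre: "walk_betw H (hd xs) (take (Suc i) xs) (xs ! i)"
    using walk_betw_take[OF xs, of i] assms(2,3) by simp
  have suf: "walk_betw H (xs ! j) (drop j xs) (last xs)"
    by (rule walk_betw_drop[OF xs assms(3)])
  let ?detour = "(take (Suc i) xs @ tl ys) @ tl (drop j xs)"
  have "walk_betw H (hd xs) ?detour (last xs)"
    by (rule walk_betw_append[OF walk_betw_append[OF pre assms(4)] suf])
  then have "walk_len xs \<le> walk_len ?detour"
    using assms(1) unfolding shortest_walk_def by blast
  also have "\<dots> = i + walk_len ys + (walk_len xs - j)"
  proof -
    have "ys \<noteq> []" using assms(4) by (auto simp: walk_betw_def)
    then show ?thesis
      using assms(2,3) by (simp add: walk_len_def)
  qed
  finally show ?thesis
    using assms(2,3) by (simp add: walk_len_def)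
qed

lemma shortest_walk_hop_reachable_le:
  "shortest_walk H xs \<Longrightarrow> i \<le> j \<Longrightarrow> j < length xs \<Longrightarrow> hop_reachable H t (xs ! i) (xs ! j)
    \<Longrightarrow> j - i \<le> t"
  unfolding hop_reachable_iff using shortest_walk_segment_le le_trans by blast

lemma shortest_walk_nth_neq:
  "shortest_walk H xs \<Longrightarrow> i < j \<Longrightarrow> j < length xs \<Longrightarrow> xs ! i \<noteq> xs ! j"
  using shortest_walk_hop_reachable_le[of H xs i j 0] hop_reachable_refl[of H 0 "xs ! i"] by auto

definition common_reach :: "'a graph \<Rightarrow> nat \<Rightarrow> 'a \<Rightarrow> 'a \<Rightarrow> 'a set" where
  "common_reach H \<tau> u v = {w. hop_reachable H \<tau> u w \<and> hop_reachable H \<tau> v w}"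

lemma common_reach_subset_verts:
  assumes "{u, v} \<in> H"
  shows "common_reach H \<tau> u v \<subseteq> verts H"
proof -
  have "u \<in> verts H" using assms by (auto simp: verts_def)
  then show ?thesis using hop_reachable_in_verts by (auto simp: common_reach_def)
qed

lemma card_common_reach_ge:
  assumes "finite (verts H)" "truss_property H k \<tau>" "1 \<le> \<tau>" "{u, v} \<in> H" "u \<noteq> v"
  shows "k \<le> int (card (common_reach H \<tau> u v))"
proof -
  let ?\<Delta> = "nbhd H \<tau> u \<inter> nbhd H \<tau> v"
  have fin: "finite (common_reach H \<tau> u v)"
    using assms(1,4) common_reach_subset_verts finite_subset by metis
  have uv: "hop_reachable H \<tau> u v"
    by (rule hop_reachable_edge[OF assms(4,3)])
  then have "hop_reachable H \<tau> v u"
    by (rule hop_reachable_sym)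
  with uv have "{u, v} \<union> ?\<Delta> \<subseteq> common_reach H \<tau> u v"
    using hop_reachable_refl by (auto simp: common_reach_def nbhd_def)
  then have "card ({u, v} \<union> ?\<Delta>) \<le> card (common_reach H \<tau> u v)"
    using fin by (rule card_mono[rotated])
  moreover have "card ({u, v} \<union> ?\<Delta>) = 2 + support H \<tau> u v"
    using fin assms(5) \<open>{u, v} \<union> ?\<Delta> \<subseteq> _\<close>
    by (subst card_Un_disjoint) (auto simp: support_def nbhd_def intro: finite_subset)
  moreover have "k - 2 \<le> int (support H \<tau> u v)"
    using assms(2,4) by (simp add: truss_property_def)
  ultimately show ?thesis by linarith
qed

lemma card_le_if_span_lt:
  fixes I :: "nat set"
  assumes "finite I" "\<And>i j. i \<in> I \<Longrightarrow> j \<in> I \<Longrightarrow> i \<le> j \<Longrightarrow> j - i < m"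
  shows "card I \<le> m"
proof (cases "I = {}")
  case False
  have "I \<subseteq> {Min I..<Min I + m}"
  proof
    fix j assume j: "j \<in> I"
    have "Min I \<in> I" "Min I \<le> j" using assms(1) False j by auto
    then show "j \<in> {Min I..<Min I + m}" using assms(2)[of "Min I" j] j by auto
  qed
  then show ?thesis
    using card_mono[of "{Min I..<Min I + m}" I] by simp
qed simp

definition reach_indices :: "'a graph \<Rightarrow> nat \<Rightarrow> 'a list \<Rightarrow> 'a \<Rightarrow> nat set" where
  "reach_indices H \<tau> xs w = {i\<in>{..<walk_len xs}. w \<in> common_reach H \<tau> (xs ! i) (xs ! Suc i)}"

lemma reach_indices_hop_reachable:
  "i \<in> reach_indices H \<tau> xs w \<Longrightarrow>
    Suc i < length xs \<and> hop_reachable H \<tau> (xs ! i) w \<and> hop_reachable H \<tau> w (xs ! Suc i)"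
  by (auto simp: reach_indices_def common_reach_def walk_len_def intro: hop_reachable_sym)

lemma finite_reach_indices: "finite (reach_indices H \<tau> xs w)"
  by (simp add: reach_indices_def)

lemma card_reach_indices_le:
  assumes "shortest_walk H xs"
  shows "card (reach_indices H \<tau> xs w) \<le> 2 * \<tau>"
proof (rule card_le_if_span_lt[OF finite_reach_indices])
  fix i j assume i: "i \<in> reach_indices H \<tau> xs w"
    and j: "j \<in> reach_indices H \<tau> xs w" and "i \<le> j"
  have "hop_reachable H \<tau> (xs ! i) w" "hop_reachable H \<tau> w (xs ! Suc j)"
    using reach_indices_hop_reachable[OF i] reach_indices_hop_reachable[OF j] by simp_all
  then have "hop_reachable H (\<tau> + \<tau>) (xs ! i) (xs ! Suc j)"
    by (rule hop_reachable_trans)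
  then have "Suc j - i \<le> \<tau> + \<tau>"
    using shortest_walk_hop_reachable_le[OF assms, of i "Suc j"] reach_indices_hop_reachable[OF j]
      \<open>i \<le> j\<close> by simp
  then show "j - i < 2 * \<tau>"
    using \<open>i \<le> j\<close> by linarith
qed

lemma card_reach_indices_hd_le:
  assumes "shortest_walk H xs"
  shows "card (reach_indices H \<tau> xs (hd xs)) \<le> \<tau>"
proof (rule card_le_if_span_lt[OF finite_reach_indices])
  have "xs \<noteq> []" using assms by (auto simp: shortest_walk_def)
  fix i j assume "i \<in> reach_indices H \<tau> xs (hd xs)"
    and j: "j \<in> reach_indices H \<tau> xs (hd xs)" and "i \<le> j"
  have "Suc j < length xs" "hop_reachable H \<tau> (xs ! 0) (xs ! Suc j)"
    using reach_indices_hop_reachable[OF j] \<open>xs \<noteq> []\<close> by (simp_all add: hd_conv_nth)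
  then have "Suc j \<le> \<tau>"
    using shortest_walk_hop_reachable_le[OF assms, of 0 "Suc j"] by simp
  then show "j - i < \<tau>"
    by linarith
qed

lemma card_reach_indices_last_le:
  assumes "shortest_walk H xs"
  shows "card (reach_indices H \<tau> xs (last xs)) \<le> \<tau>"
proof (rule card_le_if_span_lt[OF finite_reach_indices])
  have "xs \<noteq> []" using assms by (auto simp: shortest_walk_def)
  let ?n = "length xs - 1"
  fix i j assume i: "i \<in> reach_indices H \<tau> xs (last xs)"
    and j: "j \<in> reach_indices H \<tau> xs (last xs)" and "i \<le> j"
  have "j < ?n" "hop_reachable H \<tau> (xs ! i) (xs ! ?n)"
    using reach_indices_hop_reachable[OF i] reach_indices_hop_reachable[OF j] \<open>xs \<noteq> []\<close>
    by (auto simp: last_conv_nth)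
  then have "?n - i \<le> \<tau>"
    using shortest_walk_hop_reachable_le[OF assms, of i ?n] \<open>i \<le> j\<close> by simp
  then show "j - i < \<tau>"
    using \<open>j < ?n\<close> \<open>i \<le> j\<close> by linarith
qed

lemma sum_le_with_two_halved_terms:
  fixes f :: "'a \<Rightarrow> nat"
  assumes "finite V" "a \<in> V" "b \<in> V" "a \<noteq> b" "f a \<le> t" "f b \<le> t"
    and "\<And>w. w \<in> V \<Longrightarrow> f w \<le> 2 * t"
  shows "sum f V \<le> 2 * t * (card V - 1)"
proof -
  have ab: "{a, b} \<subseteq> V" using assms(2,3) by simp
  have "sum f V = f a + f b + sum f (V - {a, b})"
    using sum.subset_diff[OF ab assms(1), where g = f] assms(4) by simp
  also have "\<dots> \<le> t + t + sum (\<lambda>_. 2 * t) (V - {a, b})"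
    using assms(5-7) by (intro add_mono sum_mono) auto
  also have "\<dots> = 2 * t * (card V - 1)"
  proof -
    have "card (V - {a, b}) = card V - 2"
      using card_Diff_subset[OF _ ab] assms(4) by simp
    moreover have "2 \<le> card V"
      using card_mono[OF assms(1) ab] assms(4) by simp
    ultimately show ?thesis
      by (simp add: algebra_simps)
  qed
  finally show ?thesis .
qed

lemma truss_shortest_walk_len_bound:
  assumes fin: "finite (verts H)" and truss: "truss_property H k \<tau>" and "1 \<le> \<tau>"
    and short: "shortest_walk H xs"
  shows "int (walk_len xs) * k \<le> int (2 * \<tau> * (card (verts H) - 1))"
proof (cases "walk_len xs = 0")
  case False
  define D where "D = walk_len xs"
  define S where "S i = common_reach H \<tau> (xs ! i) (xs ! Suc i)" for i
  have len: "length xs = Suc D"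
    using False by (simp add: D_def walk_len_def)
  have edge: "{xs ! i, xs ! Suc i} \<in> H" if "i < D" for i
    using short that len by (simp add: shortest_walk_def walk_def)
  have "int D * k = (\<Sum>i<D. k)"
    by simp
  also have "\<dots> \<le> (\<Sum>i<D. int (card (S i)))"
    using card_common_reach_ge[OF fin truss \<open>1 \<le> \<tau>\<close> edge] shortest_walk_nth_neq[OF short] len
    by (intro sum_mono) (simp add: S_def)
  also have "\<dots> = int (\<Sum>w\<in>verts H. card (reach_indices H \<tau> xs w))"
  proof -
    have "{w\<in>verts H. w \<in> S i} = S i" if "i < D" for i
      using common_reach_subset_verts[OF edge[OF that]] by (auto simp: S_def)
    then have "(\<Sum>i<D. card (S i)) = (\<Sum>i<D. card {w\<in>verts H. w \<in> S i})"
      by simp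
    also have "\<dots> = (\<Sum>w\<in>verts H. card (reach_indices H \<tau> xs w))"
      by (rule sum_multicount_gen) (simp_all add: fin reach_indices_def S_def D_def)
    finally show ?thesis
      by (simp only: flip: of_nat_sum)
  qed
  also have "\<dots> \<le> int (2 * \<tau> * (card (verts H) - 1))"
  proof -
    have "xs \<noteq> []"
      using len by auto
    then have "hd xs = xs ! 0" "last xs = xs ! D"
      using len by (simp_all add: hd_conv_nth last_conv_nth)
    then have ends: "hd xs \<in> verts H" "last xs \<in> verts H" "hd xs \<noteq> last xs"
      using edge[of 0] edge[of "D - 1"] False shortest_walk_nth_neq[OF short, of 0 D] len
      by (auto simp: verts_def D_def)
    have "(\<Sum>w\<in>verts H. card (reach_indices H \<tau> xs w)) \<le> 2 * \<tau> * (card (verts H) - 1)"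
      by (rule sum_le_with_two_halved_terms[OF fin ends])
        (simp_all add: card_reach_indices_le[OF short] card_reach_indices_hd_le[OF short]
          card_reach_indices_last_le[OF short])
    then show ?thesis
      by (simp only: of_nat_le_iff)
  qed
  finally show ?thesis by (simp add: D_def)
qed simp

definition component_of :: "'a graph \<Rightarrow> 'a \<Rightarrow> 'a graph" where
  "component_of H v = {e\<in>H. e \<subseteq> {u\<in>verts H. connected_in H v u}}"

lemma is_component_iff: "is_component H C \<longleftrightarrow> (\<exists>v\<in>verts H. C = component_of H v)"
  by (simp add: is_component_def component_of_def)

lemma component_of_subset: "component_of H v \<subseteq> H"
  by (auto simp: component_of_def)

lemma in_verts_component_ofD:
  "u \<in> verts (component_of H v) \<Longrightarrow> connected_in H v u"
  by (auto simp: component_of_def verts_def)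

lemma walk_component_ofI:
  assumes "walk H xs" "connected_in H v (hd xs)"
  shows "walk (component_of H v) xs"
  unfolding walk_def
proof (intro conjI allI impI)
  show "xs \<noteq> []" using assms(1) by (simp add: walk_def)
  fix i assume i: "Suc i < length xs"
  have reach: "connected_in H v (xs ! j)" if "j < length xs" for j
  proof -
    have "connected_in H (hd xs) (xs ! j)"
      using walk_betw_take[OF assms(1) that] by (auto simp: connected_in_iff)
    then show ?thesis
      by (rule connected_in_trans[OF assms(2)])
  qed
  have "{xs ! i, xs ! Suc i} \<in> H"
    using assms(1) i by (simp add: walk_def)
  moreover from this have "{xs ! i, xs ! Suc i} \<subseteq> verts H"
    by (auto simp: verts_def)
  ultimately show "{xs ! i, xs ! Suc i} \<in> component_of H v"
    using reach[of i] reach[of "Suc i"] i by (auto simp: component_of_def)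
qed

lemma hop_reachable_component_of_iff:
  assumes "connected_in H v u"
  shows "hop_reachable (component_of H v) t u w \<longleftrightarrow> hop_reachable H t u w"
proof
  assume "hop_reachable (component_of H v) t u w"
  then obtain xs where "walk (component_of H v) xs" "hd xs = u" "last xs = w" "walk_len xs \<le> t"
    unfolding hop_reachable_def by blast
  moreover from this(1) have "walk H xs"
    by (rule walk_mono[OF _ component_of_subset])
  ultimately show "hop_reachable H t u w"
    unfolding hop_reachable_def by blast
next
  assume "hop_reachable H t u w"
  then obtain xs where "walk H xs" "hd xs = u" "last xs = w" "walk_len xs \<le> t"
    unfolding hop_reachable_def by blast
  moreover from this(1,2) have "walk (component_of H v) xs"
    using walk_component_ofI[of H xs v] assms by simp
  ultimately show "hop_reachable (component_of H v) t u w"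
    unfolding hop_reachable_def by blast
qed

lemma truss_property_component_of:
  assumes "truss_property H k \<tau>"
  shows "truss_property (component_of H v) k \<tau>"
  unfolding truss_property_def
proof (intro allI impI)
  fix a b assume ab: "{a, b} \<in> component_of H v"
  then have "a \<in> verts (component_of H v)" "b \<in> verts (component_of H v)"
    by (auto simp: verts_def)
  then have "connected_in H v a" "connected_in H v b"
    by (simp_all add: in_verts_component_ofD)
  then have "support (component_of H v) \<tau> a b = support H \<tau> a b"
    by (simp add: support_def nbhd_def hop_reachable_component_of_iff)
  moreover have "{a, b} \<in> H"
    by (rule subsetD[OF component_of_subset ab])
  then have "k - 2 \<le> int (support H \<tau> a b)"
    using assms unfolding truss_property_def by blast
  ultimately show "k - 2 \<le> int (support (component_of H v) \<tau> a b)"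
    by simp
qed

lemma connected_in_component_of:
  assumes "u \<in> verts (component_of H v)" "w \<in> verts (component_of H v)"
  shows "connected_in (component_of H v) u w"
proof -
  have vu: "connected_in H v u" and vw: "connected_in H v w"
    using assms by (simp_all add: in_verts_component_ofD)
  have "connected_in H u w"
    by (rule connected_in_trans[OF connected_in_sym[OF vu] vw])
  then obtain xs where xs: "walk_betw H u xs w"
    by (auto simp: connected_in_iff)
  then have "walk (component_of H v) xs"
    using walk_component_ofI[of H xs v] vu by (simp add: walk_betw_def)
  then show ?thesis
    using xs by (auto simp: connected_in_iff walk_betw_def)
qed

lemma simple_graph_subset: "simple_graph G \<Longrightarrow> H \<subseteq> G \<Longrightarrow> simple_graph H"
  unfolding simple_graph_def by (meson finite_subset subsetD)

lemma finite_verts: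
  assumes "simple_graph H"
  shows "finite (verts H)"
proof -
  have "finite H" "\<forall>e\<in>H. finite e"
    using assms by (auto simp: simple_graph_def intro: card_ge_0_finite)
  then show ?thesis
    unfolding verts_def by (intro finite_Union) auto
qed

lemma self_in_verts_component_of:
  assumes "simple_graph H" "v \<in> verts H"
  shows "v \<in> verts (component_of H v)"
proof -
  obtain e where e: "e \<in> H" "v \<in> e"
    using assms(2) by (auto simp: verts_def)
  then obtain x y where xy: "e = {x, y}"
    using assms(1) card_2_iff unfolding simple_graph_def by metis
  have "connected_in H x y" "connected_in H y x"
    using e(1) walk_betw_edge[of x y H] walk_betw_edge[of y x H] xy
    unfolding connected_in_iff by (auto simp: insert_commute)
  then have "\<forall>u\<in>e. connected_in H v u"
    using e(2) xy connected_in_refl by auto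
  then have "e \<in> component_of H v"
    using e(1) by (auto simp: component_of_def verts_def)
  then show ?thesis
    using e(2) by (auto simp: verts_def)
qed

lemma diameter_attained:
  assumes "finite (verts H)" "verts H \<noteq> {}"
  shows "\<exists>u\<in>verts H. \<exists>v\<in>verts H. diameter H = dist H u v"
proof -
  let ?D = "(\<lambda>(u, v). dist H u v) ` (verts H \<times> verts H)"
  have "diameter H = Max ?D"
    unfolding diameter_def by (rule arg_cong[where f = Max]) auto
  moreover have "finite ?D" "?D \<noteq> {}"
    using assms by auto
  ultimately have "diameter H \<in> ?D"
    using Max_in by simp
  then show ?thesis
    by auto
qed

lemma diameter_component_of_mult_le:
  assumes simple: "simple_graph H" and truss: "truss_property H k \<tau>" and "1 \<le> \<tau>"
    and v: "v \<in> verts H"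
  shows "int (diameter (component_of H v)) * k
    \<le> int (2 * \<tau> * (card (verts (component_of H v)) - 1))"
proof -
  let ?C = "component_of H v"
  have fin: "finite (verts ?C)"
    by (rule finite_verts[OF simple_graph_subset[OF simple component_of_subset]])
  obtain a b where ab: "a \<in> verts ?C" "b \<in> verts ?C" "diameter ?C = dist ?C a b"
    using diameter_attained[OF fin] self_in_verts_component_of[OF simple v] by blast
  then have "connected_in ?C a b"
    by (simp add: connected_in_component_of)
  then obtain xs where xs: "shortest_walk ?C xs" "walk_len xs = diameter ?C"
    using shortest_walk_exists ab(3) by metis
  show ?thesis
    using truss_shortest_walk_len_bound[OF fin truss_property_component_of[OF truss] \<open>1 \<le> \<tau>\<close> xs(1)]
    by (simp add: xs(2))
qed

theorem mainTheorem2: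
  fixes G T C :: "'a graph" and k :: int and \<tau> :: nat
  assumes "simple_graph G"
    and "\<tau> \<ge> 1"
    and "k > 0"
    and "is_truss G k \<tau> T"
    and "is_component T C"
  shows "real (diameter C) \<le> 2 * real \<tau> * (real (card (verts C)) - 1) / real_of_int k"
proof -
  obtain v where v: "v \<in> verts T" and C: "C = component_of T v"
    using assms(5) by (auto simp: is_component_iff)
  have simple: "simple_graph T" and truss: "truss_property T k \<tau>"
    using assms(1,4) simple_graph_subset by (auto simp: is_truss_def)
  have "int (diameter C) * k \<le> int (2 * \<tau> * (card (verts C) - 1))"
    using diameter_component_of_mult_le[OF simple truss assms(2) v] C by simp
  then have "real (diameter C) * real_of_int k \<le> real (2 * \<tau> * (card (verts C) - 1))"
    by (metis of_int_le_iff of_int_mult of_int_of_nat_eq)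
  also have "\<dots> = 2 * real \<tau> * (real (card (verts C)) - 1)"
  proof -
    have "v \<in> verts C" "finite (verts C)"
      using self_in_verts_component_of[OF simple v]
        finite_verts[OF simple_graph_subset[OF simple component_of_subset]] C by simp_all
    then have "0 < card (verts C)"
      using card_gt_0_iff by blast
    then show ?thesis
      by (simp add: of_nat_diff Suc_le_eq)
  qed
  finally show ?thesis
    using assms(3) by (simp add: pos_le_divide_eq)
qed

end
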